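(* A large scale group $G$ has asymptotic dimension $0$ if and only if for every bounded subset $B$ of $G$ the subgroup $\langle B\rangle$ generated by $B$ is bounded.
   Context: A bornology on a set $X$ is a cover of $X$ closed under taking subsets and finite unions. A large scale group is a group $G$ with a bornology $\mathcal B$ that is closed under inverses ($B\in\mathcal B\Rightarrow B^{-1}\in\mathcal B$) and products ($B_1,B_2\in\mathcal B\Rightarrow B_1B_2\in\mathcal B$); its uniformly bounded covers are the covers of $G$ refining $\{gB\}_{g\in G}$ for some $B\in\mathcal B$, and its bounded sets are the members of $\mathcal B$. A large scale space has asymptotic dimension $0$ if every uniformly bounded cover refines a uniformly bounded cover consisting of mutually disjoint sets. *)

theory Defs
  imports "HOL-Algebra.Generated_Groups"
begin

definition bornology :: "'a set \<Rightarrow> 'a set set \<Rightarrow> bool" where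
  "bornology X Bs \<longleftrightarrow>
     Bs \<subseteq> Pow X \<and> Union Bs = X \<and>
     (\<forall>B\<in>Bs. \<forall>C. C \<subseteq> B \<longrightarrow> C \<in> Bs) \<and>
     (\<forall>B1\<in>Bs. \<forall>B2\<in>Bs. B1 \<union> B2 \<in> Bs)"

definition large_scale_group :: "('a, 'b) monoid_scheme \<Rightarrow> 'a set set \<Rightarrow> bool" where
  "large_scale_group G Bs \<longleftrightarrow>
     group G \<and> bornology (carrier G) Bs \<and>
     (\<forall>B\<in>Bs. (\<lambda>x. inv\<^bsub>G\<^esub> x) ` B \<in> Bs) \<and>
     (\<forall>B1\<in>Bs. \<forall>B2\<in>Bs. B1 <#>\<^bsub>G\<^esub> B2 \<in> Bs)"

definition is_cover :: "'a set \<Rightarrow> 'a set set \<Rightarrow> bool" where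
  "is_cover X Us \<longleftrightarrow> Us \<subseteq> Pow X \<and> Union Us = X"

definition refines :: "'a set set \<Rightarrow> 'a set set \<Rightarrow> bool" where
  "refines Us Vs \<longleftrightarrow> (\<forall>U\<in>Us. \<exists>V\<in>Vs. U \<subseteq> V)"

definition unif_bounded_cover :: "('a, 'b) monoid_scheme \<Rightarrow> 'a set set \<Rightarrow> 'a set set \<Rightarrow> bool" where
  "unif_bounded_cover G Bs Us \<longleftrightarrow>
     is_cover (carrier G) Us \<and>
     (\<exists>B\<in>Bs. refines Us ((\<lambda>g. g <#\<^bsub>G\<^esub> B) ` carrier G))"

definition asdim_zero :: "('a, 'b) monoid_scheme \<Rightarrow> 'a set set \<Rightarrow> bool" where
  "asdim_zero G Bs \<longleftrightarrow>
     (\<forall>Us. unif_bounded_cover G Bs Us \<longrightarrow>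
        (\<exists>Vs. unif_bounded_cover G Bs Vs \<and> refines Us Vs \<and>
              (\<forall>V\<in>Vs. \<forall>W\<in>Vs. V \<noteq> W \<longrightarrow> V \<inter> W = {})))"

end

theory Submission
  imports Defs "HOL-Algebra.Left_Coset"
begin

text \<open>
  If every bounded set generates a bounded subgroup, the left cosets of the subgroup generated by
  a bounded set \<open>B\<close> form a uniformly bounded partition of \<open>G\<close> coarsening the cover by the
  translates \<open>gB\<close>.
  Conversely, take a bounded symmetric \<open>B\<close> containing \<open>\<one>\<close> and a disjoint uniformly bounded
  cover coarsening the translates \<open>gB\<close>, and let \<open>V\<close> be the member containing \<open>\<one>B\<close>. For
  \<open>y \<in> V\<close> the member containing \<open>yB\<close> also contains \<open>y\<close>, so by disjointness it is \<open>V\<close>.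
  Hence \<open>V\<close> is closed under right multiplication by \<open>B\<close>, contains \<open>\<langle>B\<rangle>\<close>, and the
  latter is bounded.
\<close>

lemma LCOSETS_eq_image: "lcosets\<^bsub>G\<^esub> H = (\<lambda>g. g <#\<^bsub>G\<^esub> H) ` carrier G"
  unfolding LCOSETS_def by blast

lemma (in monoid) l_coset_self: "g \<in> carrier G \<Longrightarrow> \<one> \<in> B \<Longrightarrow> g \<in> g <# B"
  unfolding l_coset_def by (metis UN_iff r_one singletonI)

lemma (in group) generate_subset_if_right_mult_closed:
  assumes "B \<subseteq> carrier G" and "V \<subseteq> carrier G" and "\<one> \<in> V"
    and closed: "\<And>y b. y \<in> V \<Longrightarrow> b \<in> B \<Longrightarrow> y \<otimes> b \<in> V \<and> y \<otimes> inv b \<in> V"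
  shows "generate G B \<subseteq> V"
proof -
  define K where "K = {x \<in> carrier G. \<forall>y\<in>V. y \<otimes> x \<in> V \<and> y \<otimes> inv x \<in> V}"
  have "subgroup K G"
  proof (rule subgroupI)
    show "K \<subseteq> carrier G" unfolding K_def by blast
    have "\<one> \<in> K" using \<open>V \<subseteq> carrier G\<close> unfolding K_def by auto
    then show "K \<noteq> {}" by blast
    show "inv x \<in> K" if "x \<in> K" for x
      using that \<open>V \<subseteq> carrier G\<close> unfolding K_def by auto
    show "x \<otimes> x' \<in> K" if "x \<in> K" "x' \<in> K" for x x'
    proof -
      have "y \<otimes> (x \<otimes> x') = (y \<otimes> x) \<otimes> x'" "y \<otimes> inv (x \<otimes> x') = (y \<otimes> inv x') \<otimes> inv x"
        if "y \<in> V" for y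
        using that \<open>x \<in> K\<close> \<open>x' \<in> K\<close> \<open>V \<subseteq> carrier G\<close>
        by (auto simp: K_def m_assoc inv_mult_group)
      then show ?thesis using that unfolding K_def by auto
    qed
  qed
  moreover have "B \<subseteq> K" using assms unfolding K_def by blast
  ultimately have "generate G B \<subseteq> K" by (intro generate_subgroup_incl)
  then show ?thesis
    using \<open>\<one> \<in> V\<close> unfolding K_def by fastforce
qed

lemma (in monoid) right_mult_closed_if_disjoint_refinement:
  assumes "refines ((\<lambda>g. g <# S) ` carrier G) Vs" and "\<one> \<in> S"
    and disjoint: "\<forall>V\<in>Vs. \<forall>W\<in>Vs. V \<noteq> W \<longrightarrow> V \<inter> W = {}"
    and "V \<in> Vs" "y \<in> V" "y \<in> carrier G" "s \<in> S"
  shows "y \<otimes> s \<in> V"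
proof -
  obtain W where "W \<in> Vs" "y <# S \<subseteq> W"
    using assms(1) \<open>y \<in> carrier G\<close> unfolding refines_def by blast
  moreover have "y \<in> W" using calculation l_coset_self[OF \<open>y \<in> carrier G\<close> \<open>\<one> \<in> S\<close>] by blast
  ultimately have "y <# S \<subseteq> V" using disjoint \<open>V \<in> Vs\<close> \<open>y \<in> V\<close> by blast
  then show ?thesis using \<open>s \<in> S\<close> unfolding l_coset_def by blast
qed

lemma large_scale_groupD:
  assumes "large_scale_group G Bs"
  shows large_scale_group_group: "group G"
    and bounded_subset_carrier: "B \<in> Bs \<Longrightarrow> B \<subseteq> carrier G"
    and bounded_subset: "B \<in> Bs \<Longrightarrow> C \<subseteq> B \<Longrightarrow> C \<in> Bs"
    and bounded_Un: "B \<in> Bs \<Longrightarrow> C \<in> Bs \<Longrightarrow> B \<union> C \<in> Bs"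
    and bounded_inv_image: "B \<in> Bs \<Longrightarrow> (\<lambda>x. inv\<^bsub>G\<^esub> x) ` B \<in> Bs"
    and bounded_set_mult: "B \<in> Bs \<Longrightarrow> C \<in> Bs \<Longrightarrow> B <#>\<^bsub>G\<^esub> C \<in> Bs"
    and bounded_cover: "\<Union>Bs = carrier G"
  using assms unfolding large_scale_group_def bornology_def by blast+

lemma bounded_singleton:
  assumes "large_scale_group G Bs" and "g \<in> carrier G"
  shows "{g} \<in> Bs"
proof -
  obtain B where "B \<in> Bs" "g \<in> B" using bounded_cover[OF assms(1)] assms(2) by blast
  then show ?thesis using bounded_subset[OF assms(1)] by blast
qed

lemma bounded_l_coset:
  assumes "large_scale_group G Bs" and "g \<in> carrier G" and "B \<in> Bs"
  shows "g <#\<^bsub>G\<^esub> B \<in> Bs"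
  unfolding l_coset_eq_set_mult
  using assms by (intro bounded_set_mult bounded_singleton)

lemma unif_bounded_cover_member_bounded:
  assumes "large_scale_group G Bs" and "unif_bounded_cover G Bs Us" and "U \<in> Us"
  shows "U \<in> Bs"
proof -
  obtain B g where "B \<in> Bs" "g \<in> carrier G" "U \<subseteq> g <#\<^bsub>G\<^esub> B"
    using assms(2,3) unfolding unif_bounded_cover_def refines_def by blast
  then show ?thesis using assms(1) by (blast intro: bounded_subset bounded_l_coset)
qed

lemma unif_bounded_cover_l_cosets:
  assumes "large_scale_group G Bs" and "B \<in> Bs" and "\<one>\<^bsub>G\<^esub> \<in> B"
  shows "unif_bounded_cover G Bs ((\<lambda>g. g <#\<^bsub>G\<^esub> B) ` carrier G)"
proof -
  interpret group G using assms(1) by (rule large_scale_group_group)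
  have "\<Union> ((\<lambda>g. g <#\<^bsub>G\<^esub> B) ` carrier G) = carrier G"
    using l_coset_subset_G[OF bounded_subset_carrier[OF assms(1,2)]] l_coset_self[OF _ assms(3)]
    by blast
  then show ?thesis
    using assms(2) unfolding unif_bounded_cover_def is_cover_def refines_def by blast
qed

lemma asdim_zero_if_generate_bounded:
  assumes lsg: "large_scale_group G Bs" and gen: "\<forall>B\<in>Bs. generate G B \<in> Bs"
  shows "asdim_zero G Bs"
  unfolding asdim_zero_def
proof (intro allI impI)
  interpret group G using lsg by (rule large_scale_group_group)
  fix Us assume "unif_bounded_cover G Bs Us"
  then obtain B where "B \<in> Bs" and Us_refines: "refines Us ((\<lambda>g. g <#\<^bsub>G\<^esub> B) ` carrier G)"
    unfolding unif_bounded_cover_def by blast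
  define H where "H = generate G B"
  have "H \<in> Bs" using gen \<open>B \<in> Bs\<close> unfolding H_def by blast
  have H: "subgroup H G"
    unfolding H_def using bounded_subset_carrier[OF lsg \<open>B \<in> Bs\<close>] by (rule generate_is_subgroup)
  have "unif_bounded_cover G Bs (lcosets\<^bsub>G\<^esub> H)"
    unfolding LCOSETS_eq_image
    using lsg \<open>H \<in> Bs\<close> subgroup.one_closed[OF H] by (rule unif_bounded_cover_l_cosets)
  moreover have "refines Us (lcosets\<^bsub>G\<^esub> H)"
  proof -
    have "g <#\<^bsub>G\<^esub> B \<subseteq> g <#\<^bsub>G\<^esub> H" for g
      unfolding H_def l_coset_def using generate.incl[of _ B G] by blast
    then show ?thesis
      using Us_refines unfolding refines_def LCOSETS_eq_image by (fastforce intro: order_trans)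
  qed
  moreover have "\<forall>V\<in>lcosets\<^bsub>G\<^esub> H. \<forall>W\<in>lcosets\<^bsub>G\<^esub> H. V \<noteq> W \<longrightarrow> V \<inter> W = {}"
    using lcos_disjoint[OF H] by metis
  ultimately show "\<exists>Vs. unif_bounded_cover G Bs Vs \<and> refines Us Vs \<and>
      (\<forall>V\<in>Vs. \<forall>W\<in>Vs. V \<noteq> W \<longrightarrow> V \<inter> W = {})"
    by blast
qed

lemma generate_bounded_if_asdim_zero:
  assumes lsg: "large_scale_group G Bs" and "asdim_zero G Bs" and "B \<in> Bs"
  shows "generate G B \<in> Bs"
proof -
  interpret group G using lsg by (rule large_scale_group_group)
  have "B \<subseteq> carrier G" using lsg \<open>B \<in> Bs\<close> by (rule bounded_subset_carrier)
  define S where "S = {\<one>\<^bsub>G\<^esub>} \<union> B \<union> (\<lambda>x. inv\<^bsub>G\<^esub> x) ` B"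
  have "S \<in> Bs"
    unfolding S_def
    using bounded_singleton[OF lsg one_closed] \<open>B \<in> Bs\<close> bounded_inv_image[OF lsg \<open>B \<in> Bs\<close>]
    by (intro bounded_Un[OF lsg])
  have "\<one>\<^bsub>G\<^esub> \<in> S" unfolding S_def by blast
  have "unif_bounded_cover G Bs ((\<lambda>g. g <#\<^bsub>G\<^esub> S) ` carrier G)"
    using lsg \<open>S \<in> Bs\<close> \<open>\<one>\<^bsub>G\<^esub> \<in> S\<close> by (rule unif_bounded_cover_l_cosets)
  then obtain Vs where "unif_bounded_cover G Bs Vs"
    and refines: "refines ((\<lambda>g. g <#\<^bsub>G\<^esub> S) ` carrier G) Vs"
    and disjoint: "\<forall>V\<in>Vs. \<forall>W\<in>Vs. V \<noteq> W \<longrightarrow> V \<inter> W = {}"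
    using \<open>asdim_zero G Bs\<close> unfolding asdim_zero_def by blast
  obtain V where "V \<in> Vs" "\<one>\<^bsub>G\<^esub> <#\<^bsub>G\<^esub> S \<subseteq> V"
    using refines one_closed unfolding refines_def by blast
  have "\<one>\<^bsub>G\<^esub> \<in> V" using \<open>\<one>\<^bsub>G\<^esub> <#\<^bsub>G\<^esub> S \<subseteq> V\<close> l_coset_self[OF one_closed \<open>\<one>\<^bsub>G\<^esub> \<in> S\<close>] by blast
  have "V \<subseteq> carrier G"
    using \<open>unif_bounded_cover G Bs Vs\<close> \<open>V \<in> Vs\<close> unfolding unif_bounded_cover_def is_cover_def
    by blast
  have "generate G B \<subseteq> V"
  proof (rule generate_subset_if_right_mult_closed)
    fix y b assume "y \<in> V" "b \<in> B"
    then have "b \<in> S" "inv\<^bsub>G\<^esub> b \<in> S" unfolding S_def by blast+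
    then show "y \<otimes>\<^bsub>G\<^esub> b \<in> V \<and> y \<otimes>\<^bsub>G\<^esub> inv\<^bsub>G\<^esub> b \<in> V"
      using right_mult_closed_if_disjoint_refinement[OF refines \<open>\<one>\<^bsub>G\<^esub> \<in> S\<close> disjoint \<open>V \<in> Vs\<close>]
        \<open>y \<in> V\<close> \<open>V \<subseteq> carrier G\<close> by blast
  qed fact+
  moreover have "V \<in> Bs"
    using lsg \<open>unif_bounded_cover G Bs Vs\<close> \<open>V \<in> Vs\<close> by (rule unif_bounded_cover_member_bounded)
  ultimately show ?thesis using bounded_subset[OF lsg] by blast
qed

theorem theorem4p6:
  fixes G :: "('a, 'b) monoid_scheme" and Bs :: "'a set set"
  assumes "large_scale_group G Bs"
  shows "asdim_zero G Bs \<longleftrightarrow> (\<forall>B\<in>Bs. generate G B \<in> Bs)"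
  using asdim_zero_if_generate_bounded[OF assms] generate_bounded_if_asdim_zero[OF assms]
  by blast

end
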